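(* Let $S\subseteq\mathbb{R}^d$ be a finite set, let $p,q\in S$ and let $i\in[d]$ with $p_i\ne q_i$. Let $a_1,\dots,a_\ell>0$ be the lengths, listed in order from $p_i$ to $q_i$, of the consecutive intervals into which the segment between $p_i$ and $q_i$ is partitioned by the projections $\{x_i:x\in S\}$ lying in it. Define $$s_i=\frac{(\sum_{j=1}^\ell a_j)^2}{\sum_{j=1}^\ell a_j^2},\qquad \mathrm{sep}_i=\frac{\sum_{j=1}^\ell a_j^2\min(j,\ell+1-j)}{\sum_{j=1}^\ell a_j^2}.$$ Then $\mathrm{sep}_i\ge\dfrac{s_i}{8\big(1+\ln(2|S|/s_i)\big)}$. *)

theory Defs
  imports "HOL-Analysis.Analysis"
begin

definition seg_points :: "(real^'d) set \<Rightarrow> 'd \<Rightarrow> real^'d \<Rightarrow> real^'d \<Rightarrow> real list" where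
  "seg_points S i p q =
     (let L = sorted_list_of_set
                {t \<in> (\<lambda>x. x $ i) ` S. min (p $ i) (q $ i) \<le> t \<and> t \<le> max (p $ i) (q $ i)}
      in if p $ i \<le> q $ i then L else rev L)"

definition num_gaps :: "(real^'d) set \<Rightarrow> 'd \<Rightarrow> real^'d \<Rightarrow> real^'d \<Rightarrow> nat" where
  "num_gaps S i p q = length (seg_points S i p q) - 1"

text \<open>Length a_j (for 1 \<le> j \<le> ell) of the j-th interval, counted from p_i towards q_i.\<close>
definition gap :: "(real^'d) set \<Rightarrow> 'd \<Rightarrow> real^'d \<Rightarrow> real^'d \<Rightarrow> nat \<Rightarrow> real" where
  "gap S i p q j = \<bar>seg_points S i p q ! j - seg_points S i p q ! (j - 1)\<bar>"

definition s_param :: "(real^'d) set \<Rightarrow> 'd \<Rightarrow> real^'d \<Rightarrow> real^'d \<Rightarrow> real" where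
  "s_param S i p q =
     (\<Sum>j=1..num_gaps S i p q. gap S i p q j)^2 / (\<Sum>j=1..num_gaps S i p q. (gap S i p q j)^2)"

definition sep_param :: "(real^'d) set \<Rightarrow> 'd \<Rightarrow> real^'d \<Rightarrow> real^'d \<Rightarrow> real" where
  "sep_param S i p q =
     (\<Sum>j=1..num_gaps S i p q. (gap S i p q j)^2 * real (min j (num_gaps S i p q + 1 - j)))
       / (\<Sum>j=1..num_gaps S i p q. (gap S i p q j)^2)"

end

theory Submission
  imports Defs
begin

text \<open>Write \<open>A = \<Sum> a\<^sub>j\<close>, \<open>Q = \<Sum> a\<^sub>j\<^sup>2\<close>, \<open>w\<^sub>j = min j (\<ell>+1-j)\<close>, so \<open>s = A\<^sup>2/Q\<close> and
  \<open>sep = (\<Sum> a\<^sub>j\<^sup>2 w\<^sub>j)/Q\<close>. For every \<open>m > 0\<close>, Cauchy-Schwarz with weights \<open>w\<^sub>j + m\<close> gives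
  \<open>A\<^sup>2 \<le> (\<Sum> a\<^sub>j\<^sup>2 (w\<^sub>j + m)) \<Sum> 1/(w\<^sub>j + m)\<close>, and the harmonic-type sum is at most
  \<open>2 ln (1 + \<ell>/m)\<close>; hence \<open>s \<le> (sep + m) 2 ln (1 + \<ell>/m)\<close>. Since \<open>s \<le> \<ell> \<le> |S|\<close>, the choice
  \<open>m = s / (16 (1 + ln (2|S|/s)))\<close> makes the logarithm at most \<open>8/3 (1 + ln (2|S|/s))\<close>, and
  solving for \<open>sep\<close> yields the claim. The bound holds for every real sequence \<open>a\<close> (if
  \<open>Q = 0\<close> both sides vanish).\<close>

definition participation_ratio :: "(nat \<Rightarrow> real) \<Rightarrow> nat \<Rightarrow> real" where
  "participation_ratio a l = (\<Sum>j=1..l. a j)^2 / (\<Sum>j=1..l. (a j)^2)"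

definition sep_ratio :: "(nat \<Rightarrow> real) \<Rightarrow> nat \<Rightarrow> real" where
  "sep_ratio a l = (\<Sum>j=1..l. (a j)^2 * real (min j (l + 1 - j))) / (\<Sum>j=1..l. (a j)^2)"

lemma Cauchy_Schwarz_ineq_sum_weighted:
  fixes a v :: "'a \<Rightarrow> real"
  assumes "\<And>i. i \<in> I \<Longrightarrow> v i > 0"
  shows "(\<Sum>i\<in>I. a i)^2 \<le> (\<Sum>i\<in>I. (a i)^2 * v i) * (\<Sum>i\<in>I. 1 / v i)"
proof -
  have "(\<Sum>i\<in>I. (a i * sqrt (v i)) * (1 / sqrt (v i)))^2
        \<le> (\<Sum>i\<in>I. (a i * sqrt (v i))^2) * (\<Sum>i\<in>I. (1 / sqrt (v i))^2)"
    by (rule Cauchy_Schwarz_ineq_sum)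
  moreover have "(\<Sum>i\<in>I. (a i * sqrt (v i)) * (1 / sqrt (v i))) = (\<Sum>i\<in>I. a i)"
    and "(\<Sum>i\<in>I. (a i * sqrt (v i))^2) = (\<Sum>i\<in>I. (a i)^2 * v i)"
    and "(\<Sum>i\<in>I. (1 / sqrt (v i))^2) = (\<Sum>i\<in>I. 1 / v i)"
    using assms by (intro sum.cong refl; force simp: power_mult_distrib power_divide)+
  ultimately show ?thesis by simp
qed

lemma participation_ratio_nonneg: "participation_ratio a l \<ge> 0"
  unfolding participation_ratio_def by (simp add: sum_nonneg)

lemma sep_ratio_nonneg: "sep_ratio a l \<ge> 0"
  unfolding sep_ratio_def by (simp add: sum_nonneg)

lemma participation_ratio_le: "participation_ratio a l \<le> real l"
proof -
  have "(\<Sum>j=1..l. a j)^2 \<le> (\<Sum>j=1..l. (a j)^2) * real l"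
    using Cauchy_Schwarz_ineq_sum_weighted[of "{1..l}" "\<lambda>_. 1" a] by simp
  moreover have "(\<Sum>j=1..l. (a j)^2) \<ge> 0" by (simp add: sum_nonneg)
  ultimately show ?thesis
    unfolding participation_ratio_def
    by (cases "(\<Sum>j=1..l. (a j)^2) = 0") (simp_all add: pos_divide_le_eq mult.commute)
qed

lemma sum_inverse_shifted_le_ln:
  fixes m :: real
  assumes "m > 0"
  shows "(\<Sum>j=1..l. 1 / (real j + m)) \<le> ln (real l + m) - ln m"
proof (induction l)
  case 0
  then show ?case by simp
next
  case (Suc l)
  have pos: "real l + m > 0" using assms by simp
  have "ln ((real l + m) / (real l + 1 + m)) \<le> (real l + m) / (real l + 1 + m) - 1"
    using pos by (intro ln_le_minus_one) simp
  also have "\<dots> = - 1 / (real l + 1 + m)" using pos by (simp add: field_simps)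
  finally have "1 / (real (Suc l) + m) \<le> ln (real (Suc l) + m) - ln (real l + m)"
    using pos by (simp add: ln_div add_ac)
  then show ?case using Suc by simp
qed

lemma sum_inverse_min_dist_le_ln:
  fixes m :: real
  assumes "m > 0"
  shows "(\<Sum>j=1..l. 1 / (real (min j (l + 1 - j)) + m)) \<le> 2 * ln (1 + real l / m)"
proof -
  let ?H = "\<Sum>j=1..l. 1 / (real j + m)"
  have "(\<Sum>j=1..l. 1 / (real (min j (l + 1 - j)) + m))
        \<le> (\<Sum>j=1..l. 1 / (real j + m) + 1 / (real (l + 1 - j) + m))"
    using assms by (intro sum_mono) (auto simp: min_def add_nonneg_nonneg)
  also have "\<dots> = ?H + (\<Sum>j=1..l. 1 / (real (l + 1 - j) + m))"
    by (simp add: sum.distrib)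
  also have "(\<Sum>j=1..l. 1 / (real (l + 1 - j) + m)) = ?H"
    using sum.atLeastAtMost_rev[of "\<lambda>j. 1 / (real j + m)" 1 l] by simp
  also have "?H + ?H \<le> 2 * (ln (real l + m) - ln m)"
    using sum_inverse_shifted_le_ln[OF assms, of l] by simp
  also have "ln (real l + m) - ln m = ln (1 + real l / m)"
  proof -
    have "1 + real l / m = (real l + m) / m" using assms by (simp add: field_simps)
    then show ?thesis using assms by (simp add: ln_div)
  qed
  finally show ?thesis .
qed

lemma participation_ratio_le_sep_ratio_log:
  fixes m :: real
  assumes "m > 0"
  shows "participation_ratio a l \<le> (sep_ratio a l + m) * (2 * ln (1 + real l / m))"
proof (cases "(\<Sum>j=1..l. (a j)^2) = 0")
  case True
  then show ?thesis
    using assms sep_ratio_nonneg[of a l] by (simp add: participation_ratio_def)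
next
  case False
  define Q where "Q = (\<Sum>j=1..l. (a j)^2)"
  define w where "w j = real (min j (l + 1 - j))" for j
  define T where "T = (\<Sum>j=1..l. 1 / (w j + m))"
  have Qpos: "Q > 0"
    using False unfolding Q_def by (simp add: order_le_neq_trans sum_nonneg)
  have "(\<Sum>j=1..l. a j)^2 \<le> (\<Sum>j=1..l. (a j)^2 * (w j + m)) * T"
    unfolding T_def using assms by (intro Cauchy_Schwarz_ineq_sum_weighted) (simp add: w_def)
  also have "(\<Sum>j=1..l. (a j)^2 * (w j + m)) = (\<Sum>j=1..l. (a j)^2 * w j) + m * Q"
    unfolding Q_def by (simp add: algebra_simps sum.distrib sum_distrib_left)
  also have "(\<Sum>j=1..l. (a j)^2 * w j) = sep_ratio a l * Q"
    using Qpos unfolding sep_ratio_def Q_def w_def by simp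
  also have "sep_ratio a l * Q + m * Q = (sep_ratio a l + m) * Q"
    by (simp add: algebra_simps)
  finally have "participation_ratio a l \<le> (sep_ratio a l + m) * T"
    using Qpos unfolding participation_ratio_def Q_def[symmetric]
    by (simp add: divide_le_eq algebra_simps)
  also have "\<dots> \<le> (sep_ratio a l + m) * (2 * ln (1 + real l / m))"
    unfolding T_def w_def using assms sep_ratio_nonneg[of a l]
    by (intro mult_left_mono sum_inverse_min_dist_le_ln) auto
  finally show ?thesis .
qed

lemma ln_one_plus_8_mult_log_le:
  fixes x :: real
  assumes "x \<ge> 2"
  shows "ln (1 + 8 * x * (1 + ln x)) \<le> 8 / 3 * (1 + ln x)"
proof -
  have lnx: "ln x \<ge> ln 2" using assms by simp
  have "1 + ln x \<le> x" using ln_le_minus_one[of x] assms by linarith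
  then have "x * (1 + ln x) \<le> x * x" using assms by (intro mult_left_mono) auto
  moreover have "1 \<le> x * x" using assms mult_mono[of 1 x 1 x] by simp
  ultimately have "1 + 8 * x * (1 + ln x) \<le> 9 * x^2"
    unfolding power2_eq_square mult.assoc by linarith
  moreover have "0 < 1 + 8 * x * (1 + ln x)"
    using assms lnx ln_gt_zero[of 2] by (intro add_pos_nonneg) auto
  ultimately have "ln (1 + 8 * x * (1 + ln x)) \<le> ln (9 * x^2)" by (rule ln_mono)
  also have "\<dots> = ln 9 + 2 * ln x" using assms by (simp add: ln_mult ln_realpow)
  finally have "ln (1 + 8 * x * (1 + ln x)) \<le> ln 9 + 2 * ln x" .
  moreover have "ln (9::real) \<le> ln 16" by simp
  moreover have "ln (16::real) = 4 * ln 2" using ln_realpow[of 2 4] by simp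
  moreover have "8 / 3 * (1 + ln x) = 8 / 3 + 8 / 3 * ln x" by (simp add: algebra_simps)
  ultimately show ?thesis using ln2_le_25_over_36 lnx by linarith
qed

lemma sep_ratio_lower_bound:
  assumes "l \<le> n"
  shows "sep_ratio a l \<ge>
           participation_ratio a l / (8 * (1 + ln (2 * real n / participation_ratio a l)))"
proof (cases "participation_ratio a l = 0")
  case True
  then show ?thesis by (simp add: sep_ratio_nonneg)
next
  case False
  define s where "s = participation_ratio a l"
  define x where "x = 2 * real n / s"
  define L where "L = 1 + ln x"
  define m where "m = s / (16 * L)"
  have spos: "s > 0" using False participation_ratio_nonneg[of a l] unfolding s_def by simp
  have "s \<le> real n" using participation_ratio_le[of a l] assms unfolding s_def by linarith
  then have x2: "x \<ge> 2" unfolding x_def using spos by (simp add: field_simps)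
  then have Lpos: "L > 0" unfolding L_def using ln_ge_zero[of x] by linarith
  have mpos: "m > 0" unfolding m_def using spos Lpos by simp
  have "s \<le> (sep_ratio a l + m) * (2 * ln (1 + real l / m))"
    unfolding s_def by (rule participation_ratio_le_sep_ratio_log[OF mpos])
  also have "\<dots> \<le> (sep_ratio a l + m) * (2 * ln (1 + real n / m))"
  proof -
    have "real l / m \<le> real n / m" "0 \<le> real l / m"
      using assms mpos by (simp_all add: divide_right_mono)
    then show ?thesis
      using mpos sep_ratio_nonneg[of a l]
      by (intro mult_left_mono ln_mono) (auto intro: add_pos_nonneg)
  qed
  also have "real n / m = 8 * x * L"
    unfolding m_def x_def using spos Lpos by (simp add: field_simps)
  also have "(sep_ratio a l + m) * (2 * ln (1 + 8 * x * L)) \<le> (sep_ratio a l + m) * (16 / 3 * L)"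
    using ln_one_plus_8_mult_log_le[OF x2] mpos sep_ratio_nonneg[of a l]
    unfolding L_def by (intro mult_left_mono) auto
  finally have "3 * s / (16 * L) \<le> sep_ratio a l + m"
    using Lpos by (simp add: field_simps)
  then have "s / (8 * L) \<le> sep_ratio a l"
    unfolding m_def using Lpos by (simp add: field_simps)
  then show ?thesis unfolding s_def L_def x_def .
qed

lemma num_gaps_le_card:
  assumes "finite S"
  shows "num_gaps S i p q \<le> card S"
proof -
  define F where "F = {t \<in> (\<lambda>x. x $ i) ` S. min (p $ i) (q $ i) \<le> t \<and> t \<le> max (p $ i) (q $ i)}"
  have "length (seg_points S i p q) = card F"
    unfolding seg_points_def Let_def F_def using assms by simp
  also have "card F \<le> card ((\<lambda>x. x $ i) ` S)"
    unfolding F_def using assms by (intro card_mono) auto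
  also have "\<dots> \<le> card S" using assms by (rule card_image_le)
  finally show ?thesis unfolding num_gaps_def by simp
qed

theorem lemmaC1:
  fixes S :: "(real^'d) set" and p q :: "real^'d" and i :: 'd
  assumes "finite S" and "p \<in> S" and "q \<in> S" and "p $ i \<noteq> q $ i"
  shows "sep_param S i p q \<ge>
           s_param S i p q / (8 * (1 + ln (2 * real (card S) / s_param S i p q)))"
  using sep_ratio_lower_bound[OF num_gaps_le_card[OF assms(1), of i p q], of "gap S i p q"]
  unfolding sep_param_def s_param_def sep_ratio_def participation_ratio_def .

end
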